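(* Let $p$ be an odd prime and let $O_n(\mathbb Z_{(p)})$ act on $\mathbb Z_{(p)}^n$ in the canonical way. Then $H_i(O_n(\mathbb Z_{(p)});\mathbb Z_{(p)}^n)=0$ for $i\leq\frac{n-8}{2}$.
   Context: $\mathbb Z_{(p)}$ is the localization of $\mathbb Z$ at the prime ideal $(p)$. $O_n(\mathbb Z_{(p)})$ is the group of $\mathbb Z_{(p)}$-linear automorphisms of $\mathbb Z_{(p)}^n$ preserving the form $x_1^2+\dots+x_n^2$. *)

theory Defs
  imports Complex_Main "HOL-Computational_Algebra.Primes" "HOL-Library.Function_Algebras"
begin

definition zloc :: "nat \<Rightarrow> rat set" where
  "zloc p = {q. \<not> (int p dvd snd (quotient_of q))}"

definition zvecs :: "nat \<Rightarrow> nat \<Rightarrow> (nat \<Rightarrow> rat) set" where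
  "zvecs n p = {v. (\<forall>k. v k \<in> zloc p) \<and> (\<forall>k. n \<le> k \<longrightarrow> v k = 0)}"

definition zmats :: "nat \<Rightarrow> nat \<Rightarrow> (nat \<Rightarrow> nat \<Rightarrow> rat) set" where
  "zmats n p = {A. (\<forall>i j. A i j \<in> zloc p) \<and> (\<forall>i j. n \<le> i \<or> n \<le> j \<longrightarrow> A i j = 0)}"

definition mat_mult :: "nat \<Rightarrow> (nat \<Rightarrow> nat \<Rightarrow> rat) \<Rightarrow> (nat \<Rightarrow> nat \<Rightarrow> rat) \<Rightarrow> (nat \<Rightarrow> nat \<Rightarrow> rat)" where
  "mat_mult n A B = (\<lambda>i j. \<Sum>k<n. A i k * B k j)"

definition mat_one :: "nat \<Rightarrow> nat \<Rightarrow> nat \<Rightarrow> rat" where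
  "mat_one n = (\<lambda>i j. if i = j \<and> i < n then 1 else 0)"

definition mat_vec :: "nat \<Rightarrow> (nat \<Rightarrow> nat \<Rightarrow> rat) \<Rightarrow> (nat \<Rightarrow> rat) \<Rightarrow> (nat \<Rightarrow> rat)" where
  "mat_vec n A v = (\<lambda>i. \<Sum>k<n. A i k * v k)"

definition qform :: "nat \<Rightarrow> (nat \<Rightarrow> rat) \<Rightarrow> rat" where
  "qform n v = (\<Sum>k<n. (v k)^2)"

definition orth_group :: "nat \<Rightarrow> nat \<Rightarrow> (nat \<Rightarrow> nat \<Rightarrow> rat) set" where
  "orth_group n p = {A \<in> zmats n p.
      (\<exists>B \<in> zmats n p. mat_mult n A B = mat_one n \<and> mat_mult n B A = mat_one n) \<and>
      (\<forall>v \<in> zvecs n p. qform n (mat_vec n A v) = qform n v)}"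

text \<open>C_i(G;M) = Z[G^i] (x) M, represented as finitely supported functions from
  i-tuples (lists of length i) of group elements to M.\<close>
definition bar_chains :: "'g set \<Rightarrow> 'm::ab_group_add set \<Rightarrow> nat \<Rightarrow> ('g list \<Rightarrow> 'm) set" where
  "bar_chains G M i = {c. finite {\<sigma>. c \<sigma> \<noteq> 0} \<and>
      (\<forall>\<sigma>. c \<sigma> \<noteq> 0 \<longrightarrow> length \<sigma> = i \<and> set \<sigma> \<subseteq> G) \<and> (\<forall>\<sigma>. c \<sigma> \<in> M)}"

definition bar_face :: "('g \<Rightarrow> 'g \<Rightarrow> 'g) \<Rightarrow> ('g \<Rightarrow> 'm \<Rightarrow> 'm) \<Rightarrow> nat \<Rightarrow> 'g list \<Rightarrow> 'm \<Rightarrow> 'g list \<times> 'm" where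
  "bar_face gmul act j \<sigma> m =
     (if j = 0 then (tl \<sigma>, m)
      else if j = length \<sigma> then (butlast \<sigma>, act (last \<sigma>) m)
      else (take (j - 1) \<sigma> @ [gmul (\<sigma> ! (j - 1)) (\<sigma> ! j)] @ drop (j + 1) \<sigma>, m))"

text \<open>Boundary d = sum_j (-1)^j d_j (used only on chains of positive degree).\<close>
definition bar_bd :: "('g \<Rightarrow> 'g \<Rightarrow> 'g) \<Rightarrow> ('g \<Rightarrow> 'm \<Rightarrow> 'm) \<Rightarrow> ('g list \<Rightarrow> 'm::ab_group_add) \<Rightarrow> ('g list \<Rightarrow> 'm)" where
  "bar_bd gmul act c = (\<lambda>\<tau>. \<Sum>\<sigma> \<in> {\<sigma>. c \<sigma> \<noteq> 0}. \<Sum>j \<in> {0..length \<sigma>}.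
      (let (\<rho>, m) = bar_face gmul act j \<sigma> (c \<sigma>) in
        if \<rho> = \<tau> then (if even j then m else - m) else 0))"

definition group_homology_vanishes ::
  "'g set \<Rightarrow> ('g \<Rightarrow> 'g \<Rightarrow> 'g) \<Rightarrow> ('g \<Rightarrow> 'm \<Rightarrow> 'm) \<Rightarrow> 'm::ab_group_add set \<Rightarrow> nat \<Rightarrow> bool" where
  "group_homology_vanishes G gmul act M i \<longleftrightarrow>
     (\<forall>c \<in> bar_chains G M i. (i = 0 \<or> bar_bd gmul act c = (\<lambda>_. 0)) \<longrightarrow>
        (\<exists>b \<in> bar_chains G M (Suc i). bar_bd gmul act b = c))"

end

theory Submission
  imports Defs
begin

(* The element -1 of O_n(Z_(p)) is central and acts on Z_(p)^n by -1. For a central element z of a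
   group G, inserting z into a bar at all positions with alternating signs is a chain homotopy h on
   the bar complex with d h + h d = 1 - z. Hence every cycle c' satisfies c' - z c' = d (h c'), so
   1 - z kills H_*(G;M). For z = -1 this is multiplication by 2, which is invertible on Z_(p)^n
   since p is odd: every cycle c is the boundary of h (c / 2). This works in every degree. *)

definition supp :: "('a \<Rightarrow> 'b::zero) \<Rightarrow> 'a set" where
  "supp c = {x. c x \<noteq> 0}"

definition basic_chain :: "'a \<Rightarrow> 'b::zero \<Rightarrow> 'a \<Rightarrow> 'b" where
  "basic_chain r m = (\<lambda>t. if t = r then m else 0)"

definition signed :: "nat \<Rightarrow> 'b::ab_group_add \<Rightarrow> 'b" where
  "signed j x = (if even j then x else - x)"

definition linext :: "('a \<Rightarrow> 'b::zero \<Rightarrow> 'c::comm_monoid_add) \<Rightarrow> ('a \<Rightarrow> 'b) \<Rightarrow> 'c" where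
  "linext P c = (\<Sum>s\<in>supp c. P s (c s))"

definition coeff_additive :: "('a \<Rightarrow> 'b::ab_group_add \<Rightarrow> 'c::ab_group_add) \<Rightarrow> bool" where
  "coeff_additive P \<longleftrightarrow> (\<forall>s a b. P s (a + b) = P s a + P s b)"

lemma sum_apply: "(\<Sum>x\<in>A. f x) y = (\<Sum>x\<in>A. f x y)"
  by (induction A rule: infinite_finite_induct) auto

lemma signed_apply: "signed j f y = signed j (f y)"
  by (simp add: signed_def)

lemma signed_add: "signed j (a + b) = signed j a + signed j b"
  by (simp add: signed_def)

lemma signed_sum: "signed j (\<Sum>x\<in>A. f x) = (\<Sum>x\<in>A. signed j (f x))"
  by (simp add: signed_def sum_negf)

lemma signed_signed: "signed j (signed k x) = signed (j + k) x"
  by (simp add: signed_def)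

lemma basic_chain_add: "basic_chain r ((a::'b::monoid_add) + b) = basic_chain r a + basic_chain r b"
  by (auto simp: basic_chain_def)

lemma coeff_additive_zero: "coeff_additive P \<Longrightarrow> P s 0 = 0"
  unfolding coeff_additive_def by (metis add_0 add_cancel_right_right)

lemma coeff_additive_uminus: "coeff_additive P \<Longrightarrow> P s (- a) = - P s a"
  using coeff_additive_zero[of P s] unfolding coeff_additive_def
  by (metis add.right_inverse add_eq_0_iff)

lemma supp_zero [simp]: "supp 0 = {}"
  by (simp add: supp_def)

lemma supp_uminus [simp]: "supp (- c :: 'a \<Rightarrow> 'b::group_add) = supp c"
  by (simp add: supp_def)

lemma finite_supp_basic_chain [simp]: "finite (supp (basic_chain r m))"
  by (rule finite_subset[of _ "{r}"]) (auto simp: supp_def basic_chain_def)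

lemma finite_supp_add:
  "finite (supp c) \<Longrightarrow> finite (supp d) \<Longrightarrow> finite (supp (c + d :: 'a \<Rightarrow> 'b::monoid_add))"
  by (rule finite_subset[of _ "supp c \<union> supp d"]) (auto simp: supp_def)

lemma finite_supp_sum:
  "(\<And>x. x \<in> A \<Longrightarrow> finite (supp (f x))) \<Longrightarrow> finite (supp (\<Sum>x\<in>A. f x :: 'a \<Rightarrow> 'b::comm_monoid_add))"
  by (induction A rule: infinite_finite_induct) (simp_all add: finite_supp_add)

lemma finite_supp_signed [simp]: "finite (supp (signed j c)) = finite (supp c)"
  by (simp add: signed_def supp_def)

lemma linext_superset:
  assumes "finite S" "supp c \<subseteq> S" "coeff_additive P"
  shows "linext P c = (\<Sum>s\<in>S. P s (c s))"
  unfolding linext_def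
  by (rule sum.mono_neutral_left) (use assms in \<open>auto simp: supp_def coeff_additive_zero\<close>)

lemma linext_zero [simp]: "linext P 0 = 0"
  by (simp add: linext_def)

lemma linext_add:
  assumes "finite (supp c)" "finite (supp d)" "coeff_additive P"
  shows "linext P (c + d) = linext P c + linext P d"
proof -
  let ?S = "supp c \<union> supp d"
  have "supp (c + d) \<subseteq> ?S" by (auto simp: supp_def)
  then have "linext P (c + d) = (\<Sum>s\<in>?S. P s (c s + d s))"
    using assms linext_superset[of ?S "c + d" P] by simp
  also have "\<dots> = (\<Sum>s\<in>?S. P s (c s)) + (\<Sum>s\<in>?S. P s (d s))"
    using assms(3) by (simp add: coeff_additive_def sum.distrib)
  also have "\<dots> = linext P c + linext P d"
    using assms linext_superset[of ?S c P] linext_superset[of ?S d P] by simp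
  finally show ?thesis .
qed

lemma linext_signed: "coeff_additive P \<Longrightarrow> linext P (signed j c) = signed j (linext P c)"
  by (simp add: signed_def linext_def sum_negf coeff_additive_uminus)

lemma linext_sum:
  assumes "\<And>x. x \<in> A \<Longrightarrow> finite (supp (f x))" "coeff_additive P"
  shows "linext P (\<Sum>x\<in>A. f x) = (\<Sum>x\<in>A. linext P (f x))"
  using assms
  by (induction A rule: infinite_finite_induct)
    (simp_all add: linext_add finite_supp_sum)

lemma linext_basic_chain: "coeff_additive P \<Longrightarrow> linext P (basic_chain r m) = P r m"
  by (cases "m = 0") (simp_all add: coeff_additive_zero linext_def supp_def basic_chain_def)

lemma linext_linext:
  assumes "finite (supp c)" "\<And>s m. finite (supp (P s m))" "coeff_additive Q"
  shows "linext Q (linext P c) = (\<Sum>s\<in>supp c. linext Q (P s (c s)))"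
  unfolding linext_def[of P] using assms by (simp add: linext_sum)

lemma sum_basic_chain:
  assumes "finite (supp c)" and "f 0 = 0"
  shows "(\<Sum>s\<in>supp c. basic_chain s (f (c s))) = (\<lambda>t. f (c t))"
  using assms by (auto simp: fun_eq_iff sum_apply basic_chain_def supp_def)

definition insert_at :: "nat \<Rightarrow> 'g \<Rightarrow> 'g list \<Rightarrow> 'g list" where
  "insert_at j z s = take j s @ z # drop j s"

lemma insert_at_0 [simp]: "insert_at 0 z s = z # s"
  by (simp add: insert_at_def)

lemma insert_at_length [simp]: "insert_at (length s) z s = s @ [z]"
  by (simp add: insert_at_def)

lemma insert_at_Cons: "insert_at (Suc j) z (x # s) = x # insert_at j z s"
  by (simp add: insert_at_def)

lemma insert_at_append_left: "j \<le> length A \<Longrightarrow> insert_at j z (A @ B) = insert_at j z A @ B"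
  by (simp add: insert_at_def)

lemma insert_at_append_right:
  "length A \<le> j \<Longrightarrow> insert_at j z (A @ B) = A @ insert_at (j - length A) z B"
  by (simp add: insert_at_def)

lemma length_insert_at: "j \<le> length s \<Longrightarrow> length (insert_at j z s) = Suc (length s)"
  by (simp add: insert_at_def)

lemma set_insert_at: "set (insert_at j z s) \<subseteq> insert z (set s)"
  by (auto simp: insert_at_def dest: in_set_takeD in_set_dropD)

lemma bar_face_0: "bar_face gmul act 0 s m = (tl s, m)"
  by (simp add: bar_face_def)

lemma bar_face_last: "bar_face gmul act (Suc (length s)) (s @ [x]) m = (s, act x m)"
  by (simp add: bar_face_def)

lemma bar_face_middle:
  "bar_face gmul act (Suc (length A)) (A @ a # b # B) m = (A @ gmul a b # B, m)"
  by (simp add: bar_face_def nth_append)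

lemma length_bar_face:
  "s \<noteq> [] \<Longrightarrow> k \<le> length s \<Longrightarrow> length (fst (bar_face gmul act k s m)) = length s - 1"
  by (simp add: bar_face_def) linarith

lemma split_list_at:
  assumes "j < length s"
  obtains A a B where "s = A @ a # B" "length A = j"
  by (rule that[of "take j s" "s ! j" "drop (Suc j) s"])
    (simp_all add: assms id_take_nth_drop[OF assms, symmetric])

lemma split_list_at2:
  assumes "Suc j < length s"
  obtains A a b B where "s = A @ a # b # B" "length A = j"
proof (rule that[of "take j s" "s ! j" "s ! Suc j" "drop (Suc (Suc j)) s"])
  show "s = take j s @ s ! j # s ! Suc j # drop (Suc (Suc j)) s"
    using assms by (simp add: Cons_nth_drop_Suc)
qed (use assms in simp)

lemma bar_face_insert_diag:
  assumes "1 \<le> j" "j \<le> length s" and "\<forall>a\<in>set s. gmul a z = gmul z a"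
  shows "bar_face gmul act j (insert_at j z s) m = bar_face gmul act j (insert_at (j - 1) z s) m"
proof -
  obtain A a B where s: "s = A @ a # B" and A: "length A = j - 1"
    using split_list_at[of "j - 1" s] assms(1,2) by force
  have j: "j = Suc (length A)" using A assms(1) by simp
  have "insert_at j z s = A @ a # z # B" "insert_at (j - 1) z s = A @ z # a # B"
    unfolding s j by (simp_all add: insert_at_append_right insert_at_Cons)
  moreover have "gmul a z = gmul z a" using assms(3) unfolding s by simp
  ultimately show ?thesis by (simp only: j bar_face_middle)
qed

lemma bar_face_insert_below:
  assumes "k < j" "j \<le> length s"
  shows "bar_face gmul act k (insert_at j z s) m =
    map_prod (insert_at (j - 1) z) id (bar_face gmul act k s m)"
proof -
  obtain d where j: "j = Suc (k + d)" using assms(1) less_imp_Suc_add by blast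
  show ?thesis
  proof (cases k)
    case 0
    obtain x s' where "s = x # s'" using assms by (cases s) auto
    then show ?thesis using 0 j by (simp add: bar_face_0 insert_at_Cons)
  next
    case (Suc k')
    then have "Suc k' < length s" using assms by simp
    then obtain A a b B where s: "s = A @ a # b # B" and A: "length A = k'"
      by (rule split_list_at2)
    have k: "k = Suc (length A)" using A Suc by simp
    have "insert_at j z s = A @ a # b # insert_at d z B"
      unfolding s j k by (simp add: insert_at_append_right insert_at_Cons)
    then have "bar_face gmul act k (insert_at j z s) m = (A @ gmul a b # insert_at d z B, m)"
      unfolding k by (simp only: bar_face_middle)
    moreover have "bar_face gmul act k s m = (A @ gmul a b # B, m)"
      unfolding s k by (rule bar_face_middle)
    moreover have "insert_at (j - 1) z (A @ gmul a b # B) = A @ gmul a b # insert_at d z B"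
      unfolding j k by (simp add: insert_at_append_right insert_at_Cons)
    ultimately show ?thesis by simp
  qed
qed

lemma bar_face_insert_above:
  assumes "j + 2 \<le> k" "k \<le> Suc (length s)"
  shows "bar_face gmul act k (insert_at j z s) m =
    map_prod (insert_at j z) id (bar_face gmul act (k - 1) s m)"
proof (cases "k = Suc (length s)")
  case True
  obtain s' x where s: "s = s' @ [x]" using assms by (cases s rule: rev_cases) auto
  have "j \<le> length s'" using assms s by simp
  then have "insert_at j z s = insert_at j z s' @ [x]" "k = Suc (length (insert_at j z s'))"
    using s True by (simp_all add: insert_at_append_left length_insert_at)
  moreover have "k - 1 = Suc (length s')" using s True by simp
  ultimately show ?thesis using s by (simp only: bar_face_last) simp
next
  case False
  obtain A a b B where s: "s = A @ a # b # B" and A: "length A = k - 2"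
    using split_list_at2[of "k - 2" s] assms False by force
  have j: "j \<le> length A" using A assms(1) by simp
  have "k = Suc (length (insert_at j z A))" using j A assms(1) by (simp add: length_insert_at)
  then have "bar_face gmul act k (insert_at j z s) m = (insert_at j z A @ gmul a b # B, m)"
    unfolding s insert_at_append_left[OF j] by (simp only: bar_face_middle)
  moreover have "k - 1 = Suc (length A)" using A assms(1) by simp
  then have "bar_face gmul act (k - 1) s m = (A @ gmul a b # B, m)"
    unfolding s by (simp only: bar_face_middle)
  ultimately show ?thesis using j by (simp add: insert_at_append_left)
qed

section \<open>The homotopy of a central element\<close>

lemma sum_atMost_Suc_split:
  assumes "j \<le> n"
  shows "(\<Sum>k\<le>Suc n. f k) = (\<Sum>k<j. f k) + (f j + f (Suc j)) + (\<Sum>k\<in>{j + 2..Suc n}. f k)"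
proof -
  have "{..Suc n} = ({..<j} \<union> {j, Suc j}) \<union> {j + 2..Suc n}" using assms by auto
  then have "(\<Sum>k\<le>Suc n. f k) = sum f ({..<j} \<union> {j, Suc j}) + sum f {j + 2..Suc n}"
    by (simp only:) (rule sum.union_disjoint; auto)
  also have "sum f ({..<j} \<union> {j, Suc j}) = sum f {..<j} + (f j + f (Suc j))"
    by (subst sum.union_disjoint) auto
  finally show ?thesis .
qed

(* In the application, e j k is the k-th face of the bar with z inserted at position j and t k j is
   z inserted at position j into the k-th face, so that the double sums are d (h x) and h (d x).
   The faces k = j and k = j + 1 multiply z into a neighbour; by centrality they cancel in pairs,
   leaving only the corners e 0 0 = x and e n (n + 1) = - z x. *)
lemma double_sum_homotopy:
  fixes e t :: "nat \<Rightarrow> nat \<Rightarrow> 'a::ab_group_add"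
  assumes diag: "\<And>j. 1 \<le> j \<Longrightarrow> j \<le> n \<Longrightarrow> e j j = - e (j - 1) j"
    and below: "\<And>j k. k < j \<Longrightarrow> j \<le> n \<Longrightarrow> e j k = - t k (j - 1)"
    and above: "\<And>j k. j + 2 \<le> k \<Longrightarrow> k \<le> Suc n \<Longrightarrow> e j k = - t (k - 1) j"
  shows "(\<Sum>j\<le>n. \<Sum>k\<le>Suc n. e j k) = e 0 0 + e n (Suc n) - (\<Sum>k\<le>n. \<Sum>j<n. t k j)"
proof -
  have near_diag: "(\<Sum>j\<le>m. e j j + e j (Suc j)) = e 0 0 + e m (Suc m)" if "m \<le> n" for m
    using that by (induction m) (simp_all add: diag)
  have lower: "(\<Sum>j\<le>n. \<Sum>k<j. e j k) = - (\<Sum>j<n. \<Sum>k\<le>j. t k j)"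
  proof -
    have "(\<Sum>j\<le>n. \<Sum>k<j. e j k) = (\<Sum>j<n. \<Sum>k<Suc j. e (Suc j) k)"
      by (simp only: lessThan_Suc_atMost[symmetric] sum.lessThan_Suc_shift) simp
    also have "\<dots> = (\<Sum>j<n. \<Sum>k\<le>j. - t k j)"
      by (intro sum.cong) (simp_all add: below lessThan_Suc_atMost)
    finally show ?thesis by (simp add: sum_negf)
  qed
  have upper: "(\<Sum>j\<le>n. \<Sum>k\<in>{j + 2..Suc n}. e j k) = - (\<Sum>j<n. \<Sum>k\<in>{Suc j..n}. t k j)"
  proof -
    have "(\<Sum>j\<le>n. \<Sum>k\<in>{j + 2..Suc n}. e j k) = (\<Sum>j<n. \<Sum>k\<in>{Suc (Suc j)..Suc n}. e j k)"
      by (simp add: lessThan_Suc_atMost[symmetric])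
    also have "\<dots> = (\<Sum>j<n. \<Sum>k\<in>{Suc j..n}. e j (Suc k))"
      by (simp only: sum.shift_bounds_cl_Suc_ivl)
    also have "\<dots> = (\<Sum>j<n. \<Sum>k\<in>{Suc j..n}. - t k j)"
      by (intro sum.cong refl) (simp add: above)
    finally show ?thesis by (simp add: sum_negf)
  qed
  have "(\<Sum>j<n. \<Sum>k\<le>j. t k j) + (\<Sum>j<n. \<Sum>k\<in>{Suc j..n}. t k j) = (\<Sum>j<n. \<Sum>k\<le>n. t k j)"
  proof -
    have "{..n} = {..j} \<union> {Suc j..n}" if "j < n" for j using that by auto
    then show ?thesis by (simp add: sum.distrib[symmetric] sum.union_disjoint)
  qed
  then have triangles: "(\<Sum>j<n. \<Sum>k\<le>j. t k j) + (\<Sum>j<n. \<Sum>k\<in>{Suc j..n}. t k j) = (\<Sum>k\<le>n. \<Sum>j<n. t k j)"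
    by (simp add: sum.swap[of _ "{..<n}"])
  have "(\<Sum>j\<le>n. \<Sum>k\<le>Suc n. e j k) =
      (\<Sum>j\<le>n. (\<Sum>k<j. e j k) + (e j j + e j (Suc j)) + (\<Sum>k\<in>{j + 2..Suc n}. e j k))"
    by (rule sum.cong[OF refl], rule sum_atMost_Suc_split) simp
  also have "\<dots> = (\<Sum>j\<le>n. \<Sum>k<j. e j k) + (\<Sum>j\<le>n. e j j + e j (Suc j)) +
      (\<Sum>j\<le>n. \<Sum>k\<in>{j + 2..Suc n}. e j k)"
    by (simp only: sum.distrib)
  also have "\<dots> = e 0 0 + e n (Suc n) -
      ((\<Sum>j<n. \<Sum>k\<le>j. t k j) + (\<Sum>j<n. \<Sum>k\<in>{Suc j..n}. t k j))"
    by (simp only: lower near_diag[OF order_refl] upper) (simp add: algebra_simps)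
  finally show ?thesis by (simp only: triangles)
qed

definition face_chain ::
  "('g \<Rightarrow> 'g \<Rightarrow> 'g) \<Rightarrow> ('g \<Rightarrow> 'm \<Rightarrow> 'm) \<Rightarrow> nat \<Rightarrow> 'g list \<Rightarrow> 'm::zero \<Rightarrow> 'g list \<Rightarrow> 'm" where
  "face_chain gmul act k s m = case_prod basic_chain (bar_face gmul act k s m)"

definition bd_gen ::
  "('g \<Rightarrow> 'g \<Rightarrow> 'g) \<Rightarrow> ('g \<Rightarrow> 'm \<Rightarrow> 'm) \<Rightarrow> 'g list \<Rightarrow> 'm::ab_group_add \<Rightarrow> 'g list \<Rightarrow> 'm" where
  "bd_gen gmul act s m = (\<Sum>k\<le>length s. signed k (face_chain gmul act k s m))"

definition homotopy_gen :: "'g \<Rightarrow> 'g list \<Rightarrow> 'm::ab_group_add \<Rightarrow> 'g list \<Rightarrow> 'm" where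
  "homotopy_gen z s m = (\<Sum>j\<le>length s. signed j (basic_chain (insert_at j z s) m))"

lemma bar_bd_eq_linext: "bar_bd gmul act c = linext (bd_gen gmul act) c"
  unfolding bar_bd_def linext_def bd_gen_def face_chain_def supp_def atLeast0AtMost
  by (rule ext) (auto simp: sum_apply signed_apply basic_chain_def signed_def Let_def
      split: prod.split intro!: sum.cong)

lemma finite_supp_face_chain [simp]: "finite (supp (face_chain gmul act k s m))"
  by (simp add: face_chain_def split: prod.split)

lemma finite_supp_bd_gen: "finite (supp (bd_gen gmul act s m))"
  unfolding bd_gen_def by (simp add: finite_supp_sum)

lemma finite_supp_homotopy_gen: "finite (supp (homotopy_gen z s m))"
  unfolding homotopy_gen_def by (simp add: finite_supp_sum)

lemma face_chain_add:
  fixes act :: "'g \<Rightarrow> 'm::monoid_add \<Rightarrow> 'm"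
  assumes "\<And>g a b. act g (a + b) = act g a + act g b"
  shows "face_chain gmul act k s (a + b) = face_chain gmul act k s a + face_chain gmul act k s b"
  by (simp add: face_chain_def bar_face_def assms basic_chain_add)

lemma coeff_additive_bd_gen:
  assumes "\<And>g a b. act g (a + b) = act g a + act g b"
  shows "coeff_additive (bd_gen gmul act)"
  unfolding coeff_additive_def bd_gen_def face_chain_add[OF assms] signed_add sum.distrib
  by (intro allI refl)

lemma coeff_additive_homotopy_gen: "coeff_additive (homotopy_gen z)"
  unfolding coeff_additive_def homotopy_gen_def
  by (simp add: basic_chain_add signed_add sum.distrib)

lemma linext_homotopy_gen_face_chain:
  "linext (homotopy_gen z) (face_chain gmul act k s m) =
    (case bar_face gmul act k s m of (r, m') \<Rightarrow> homotopy_gen z r m')"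
  by (simp add: face_chain_def linext_basic_chain coeff_additive_homotopy_gen split: prod.split)

lemma linext_bd_gen_homotopy_gen_Nil:
  assumes "\<And>g a b. act g (a + b) = act g a + act g b"
  shows "linext (bd_gen gmul act) (homotopy_gen z [] m) =
    basic_chain [] m - basic_chain [] (act z m)"
  by (simp add: homotopy_gen_def linext_basic_chain coeff_additive_bd_gen[OF assms]
      bd_gen_def face_chain_def bar_face_def signed_def)

lemma linext_bd_gen_homotopy_gen_expand:
  assumes "\<And>g a b. act g (a + b) = act g a + act g b"
  shows "linext (bd_gen gmul act) (homotopy_gen z s m) =
    (\<Sum>j\<le>length s. \<Sum>k\<le>Suc (length s). signed (j + k) (face_chain gmul act k (insert_at j z s) m))"
proof -
  have "linext (bd_gen gmul act) (homotopy_gen z s m) =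
      (\<Sum>j\<le>length s. signed j (bd_gen gmul act (insert_at j z s) m))"
    unfolding homotopy_gen_def
    by (simp add: linext_sum linext_signed linext_basic_chain coeff_additive_bd_gen[OF assms])
  also have "\<dots> = (\<Sum>j\<le>length s. \<Sum>k\<le>Suc (length s).
      signed (j + k) (face_chain gmul act k (insert_at j z s) m))"
    unfolding bd_gen_def
    by (intro sum.cong refl)
      (simp add: length_insert_at signed_sum signed_signed del: sum.atMost_Suc)
  finally show ?thesis .
qed

lemma linext_homotopy_gen_bd_gen_expand:
  assumes "s \<noteq> []"
  shows "linext (homotopy_gen z) (bd_gen gmul act s m) =
    (\<Sum>k\<le>length s. \<Sum>j<length s. signed (k + j)
      (case bar_face gmul act k s m of (r, m') \<Rightarrow> basic_chain (insert_at j z r) m'))"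
proof -
  have "linext (homotopy_gen z) (bd_gen gmul act s m) =
      (\<Sum>k\<le>length s. signed k (case bar_face gmul act k s m of (r, m') \<Rightarrow> homotopy_gen z r m'))"
    unfolding bd_gen_def
    by (simp add: linext_sum linext_signed coeff_additive_homotopy_gen
        linext_homotopy_gen_face_chain)
  also have "\<dots> = (\<Sum>k\<le>length s. \<Sum>j<length s. signed (k + j)
      (case bar_face gmul act k s m of (r, m') \<Rightarrow> basic_chain (insert_at j z r) m'))"
  proof (intro sum.cong refl)
    fix k assume "k \<in> {..length s}"
    obtain r m' where rm: "bar_face gmul act k s m = (r, m')" by fastforce
    have "length r = length s - 1"
      using length_bar_face[of s k gmul act m] assms \<open>k \<in> {..length s}\<close> rm by simp
    then have "{..length r} = {..<length s}" using assms by (cases s) auto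
    then show "signed k (case bar_face gmul act k s m of (r, m') \<Rightarrow> homotopy_gen z r m') =
        (\<Sum>j<length s. signed (k + j)
          (case bar_face gmul act k s m of (r, m') \<Rightarrow> basic_chain (insert_at j z r) m'))"
      unfolding rm homotopy_gen_def by (simp add: signed_sum signed_signed)
  qed
  finally show ?thesis .
qed

lemma linext_bd_gen_homotopy_gen:
  assumes act_add: "\<And>g a b. act g (a + b) = act g a + act g b"
    and comm: "\<forall>a\<in>set s. gmul a z = gmul z a" and "s \<noteq> []"
  shows "linext (bd_gen gmul act) (homotopy_gen z s m) =
    basic_chain s m - basic_chain s (act z m) - linext (homotopy_gen z) (bd_gen gmul act s m)"
proof -
  define n where "n = length s"
  define e where "e j k = signed (j + k) (face_chain gmul act k (insert_at j z s) m)" for j k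
  define t where "t k j = signed (k + j)
    (case bar_face gmul act k s m of (r, m') \<Rightarrow> basic_chain (insert_at j z r) m')" for k j
  have "linext (bd_gen gmul act) (homotopy_gen z s m) = (\<Sum>j\<le>n. \<Sum>k\<le>Suc n. e j k)"
    unfolding e_def n_def by (rule linext_bd_gen_homotopy_gen_expand[where act = act, OF act_add])
  also have "\<dots> = e 0 0 + e n (Suc n) - (\<Sum>k\<le>n. \<Sum>j<n. t k j)"
  proof (rule double_sum_homotopy)
    fix j assume "1 \<le> j" "j \<le> n"
    moreover have "odd (j - 1 + j)" using \<open>1 \<le> j\<close> by presburger
    ultimately show "e j j = - e (j - 1) j"
      unfolding e_def face_chain_def n_def
      by (simp add: bar_face_insert_diag[OF _ _ comm] signed_def)
  next
    fix j k assume "k < j" "j \<le> n"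
    moreover have "even (j + k) \<longleftrightarrow> odd (k + (j - 1))" using \<open>k < j\<close> by presburger
    ultimately show "e j k = - t k (j - 1)"
      unfolding e_def t_def face_chain_def n_def
      by (simp add: bar_face_insert_below case_prod_map_prod signed_def)
  next
    fix j k assume "j + 2 \<le> k" "k \<le> Suc n"
    moreover have "even (j + k) \<longleftrightarrow> odd (k - 1 + j)" using \<open>j + 2 \<le> k\<close> by presburger
    ultimately show "e j k = - t (k - 1) j"
      unfolding e_def t_def face_chain_def n_def
      by (simp add: bar_face_insert_above case_prod_map_prod signed_def)
  qed
  also have "(\<Sum>k\<le>n. \<Sum>j<n. t k j) = linext (homotopy_gen z) (bd_gen gmul act s m)"
    unfolding t_def n_def using \<open>s \<noteq> []\<close> by (rule linext_homotopy_gen_bd_gen_expand[symmetric])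
  also have "e 0 0 = basic_chain s m"
    unfolding e_def by (simp add: face_chain_def bar_face_0 signed_def)
  also have "e n (Suc n) = - basic_chain s (act z m)"
    unfolding e_def n_def by (simp add: face_chain_def bar_face_last signed_def)
  finally show ?thesis by (simp only: diff_conv_add_uminus)
qed

lemma bar_bd_linext_homotopy_gen:
  assumes "\<And>g a b. act g (a + b) = act g a + act g b" and "finite (supp c)"
  shows "bar_bd gmul act (linext (homotopy_gen z) c) =
    (\<Sum>s\<in>supp c. linext (bd_gen gmul act) (homotopy_gen z s (c s)))"
  by (simp add: bar_bd_eq_linext linext_linext assms finite_supp_homotopy_gen
      coeff_additive_bd_gen[OF assms(1)])

lemma bar_bd_homotopy:
  assumes act_add: "\<And>g a b. act g (a + b) = act g a + act g b" and fin: "finite (supp c)"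
    and gens: "\<And>s. s \<in> supp c \<Longrightarrow> s \<noteq> [] \<and> (\<forall>a\<in>set s. gmul a z = gmul z a)"
  shows "bar_bd gmul act (linext (homotopy_gen z) c) =
    (\<lambda>t. c t - act z (c t)) - linext (homotopy_gen z) (bar_bd gmul act c)"
proof -
  have "act z 0 = 0" using act_add[of z 0 0] by simp
  have "bar_bd gmul act (linext (homotopy_gen z) c) =
      (\<Sum>s\<in>supp c. linext (bd_gen gmul act) (homotopy_gen z s (c s)))"
    using act_add fin by (rule bar_bd_linext_homotopy_gen)
  also have "\<dots> = (\<Sum>s\<in>supp c. basic_chain s (c s) - basic_chain s (act z (c s)) -
      linext (homotopy_gen z) (bd_gen gmul act s (c s)))"
    using gens by (intro sum.cong refl) (simp add: linext_bd_gen_homotopy_gen act_add)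
  also have "\<dots> = (\<lambda>t. c t) - (\<lambda>t. act z (c t)) - linext (homotopy_gen z) (bar_bd gmul act c)"
    using fin \<open>act z 0 = 0\<close> sum_basic_chain[of c "\<lambda>x. x"]
    by (simp add: sum_subtractf sum_basic_chain bar_bd_eq_linext linext_linext finite_supp_bd_gen
        coeff_additive_homotopy_gen)
  finally show ?thesis by (simp add: fun_diff_def)
qed

lemma bar_bd_homotopy_Nil:
  assumes act_add: "\<And>g a b. act g (a + b) = act g a + act g b" and fin: "finite (supp c)"
    and gens: "\<And>s. s \<in> supp c \<Longrightarrow> s = []"
  shows "bar_bd gmul act (linext (homotopy_gen z) c) = (\<lambda>t. c t - act z (c t))"
proof -
  have "act z 0 = 0" using act_add[of z 0 0] by simp
  have "bar_bd gmul act (linext (homotopy_gen z) c) =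
      (\<Sum>s\<in>supp c. linext (bd_gen gmul act) (homotopy_gen z s (c s)))"
    using act_add fin by (rule bar_bd_linext_homotopy_gen)
  also have "\<dots> = (\<Sum>s\<in>supp c. basic_chain s (c s) - basic_chain s (act z (c s)))"
  proof (rule sum.cong[OF refl])
    fix s assume "s \<in> supp c"
    then have "s = []" by (rule gens)
    then show "linext (bd_gen gmul act) (homotopy_gen z s (c s)) =
        basic_chain s (c s) - basic_chain s (act z (c s))"
      using linext_bd_gen_homotopy_gen_Nil[where act = act, OF act_add] by simp
  qed
  also have "\<dots> = (\<Sum>s\<in>supp c. basic_chain s (c s)) - (\<Sum>s\<in>supp c. basic_chain s (act z (c s)))"
    by (rule sum_subtractf)
  also have "\<dots> = c - (\<lambda>t. act z (c t))"
    using sum_basic_chain[OF fin, of "\<lambda>x. x"] sum_basic_chain[OF fin, of "act z"] \<open>act z 0 = 0\<close>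
    by simp
  finally show ?thesis by (simp add: fun_diff_def)
qed

lemma bar_bd_comp:
  fixes f :: "'m::ab_group_add \<Rightarrow> 'm"
  assumes add: "\<And>a b. f (a + b) = f a + f b" and equivariant: "\<And>g m. f (act g m) = act g (f m)"
    and nonzero: "\<And>s. f (c s) = 0 \<Longrightarrow> c s = 0"
  shows "bar_bd gmul act (\<lambda>s. f (c s)) = (\<lambda>t. f (bar_bd gmul act c t))"
proof -
  have zero: "f 0 = 0" using add[of 0 0] by simp
  have uminus: "f (- a) = - f a" for a
    using add[of a "- a"] zero by (simp add: eq_neg_iff_add_eq_0 add.commute)
  have "{s. f (c s) \<noteq> 0} = {s. c s \<noteq> 0}" using nonzero zero by auto
  moreover have
    "f (let (r, m) = bar_face gmul act j s x in if r = t then (if even j then m else - m) else 0) =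
     (let (r, m) = bar_face gmul act j s (f x) in if r = t then (if even j then m else - m) else 0)"
    for j s x t
    by (simp add: bar_face_def Let_def zero uminus equivariant)
  ultimately show ?thesis
    unfolding bar_bd_def
    by (simp add: sum_comp_morphism[of f, OF zero add, unfolded comp_def, symmetric])
qed

lemma sum_closed:
  assumes "0 \<in> M" "\<And>a b. a \<in> M \<Longrightarrow> b \<in> M \<Longrightarrow> a + b \<in> M" "\<And>x. x \<in> A \<Longrightarrow> f x \<in> M"
  shows "sum f A \<in> M"
  using assms(3) by (induction A rule: infinite_finite_induct) (simp_all add: assms(1,2))

lemma linext_homotopy_gen_apply:
  "linext (homotopy_gen z) c t =
    (\<Sum>s\<in>supp c. \<Sum>j\<le>length s. if t = insert_at j z s then signed j (c s) else 0)"
  unfolding linext_def homotopy_gen_def sum_apply signed_apply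
  by (auto simp: basic_chain_def signed_def intro!: sum.cong)

lemma homotopy_in_bar_chains:
  assumes c: "c \<in> bar_chains G M i" and "z \<in> G"
    and M: "0 \<in> M" "\<And>a b. a \<in> M \<Longrightarrow> b \<in> M \<Longrightarrow> a + b \<in> M" "\<And>a. a \<in> M \<Longrightarrow> - a \<in> M"
  shows "linext (homotopy_gen z) c \<in> bar_chains G M (Suc i)"
  unfolding bar_chains_def
proof (intro CollectI conjI allI impI)
  have "linext (homotopy_gen z) c = (\<Sum>s\<in>supp c. homotopy_gen z s (c s))"
    by (simp add: linext_def)
  then have "finite (supp (linext (homotopy_gen z) c))"
    by (simp add: finite_supp_sum finite_supp_homotopy_gen)
  then show "finite {t. linext (homotopy_gen z) c t \<noteq> 0}" by (simp add: supp_def)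
next
  fix t assume nonzero: "linext (homotopy_gen z) c t \<noteq> 0"
  have "\<exists>s\<in>supp c. \<exists>j\<le>length s. t = insert_at j z s"
  proof (rule ccontr)
    assume "\<not> ?thesis"
    then have "linext (homotopy_gen z) c t = 0"
      unfolding linext_homotopy_gen_apply by (auto intro!: sum.neutral)
    with nonzero show False ..
  qed
  then obtain s j where s: "s \<in> supp c" and "j \<le> length s" and t: "t = insert_at j z s"
    by blast
  have "length s = i" "set s \<subseteq> G" using s c by (auto simp: bar_chains_def supp_def)
  then show "length t = Suc i" "set t \<subseteq> G"
    using t \<open>j \<le> length s\<close> \<open>z \<in> G\<close> set_insert_at[of j z s] by (auto simp: length_insert_at)
next
  fix t
  have "c s \<in> M" for s using c by (simp add: bar_chains_def)
  then show "linext (homotopy_gen z) c t \<in> M"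
    unfolding linext_homotopy_gen_apply by (intro sum_closed) (auto simp: signed_def M)
qed

theorem center_kills_group_homology:
  fixes act :: "'g \<Rightarrow> 'm::ab_group_add \<Rightarrow> 'm"
  assumes "z \<in> G" and central: "\<And>g. g \<in> G \<Longrightarrow> gmul g z = gmul z g"
    and act_add: "\<And>g a b. act g (a + b) = act g a + act g b"
    and M: "0 \<in> M" "\<And>a b. a \<in> M \<Longrightarrow> b \<in> M \<Longrightarrow> a + b \<in> M" "\<And>a. a \<in> M \<Longrightarrow> - a \<in> M"
    and \<psi>_add: "\<And>a b. \<psi> (a + b) = \<psi> a + \<psi> b"
    and \<psi>_act: "\<And>g m. \<psi> (act g m) = act g (\<psi> m)"
    and \<psi>_M: "\<And>m. m \<in> M \<Longrightarrow> \<psi> m \<in> M"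
    and \<psi>_inverse: "\<And>m. m \<in> M \<Longrightarrow> \<psi> m - act z (\<psi> m) = m"
  shows "group_homology_vanishes G gmul act M i"
  unfolding group_homology_vanishes_def
proof (intro ballI impI)
  fix c assume c: "c \<in> bar_chains G M i" and cycle: "i = 0 \<or> bar_bd gmul act c = (\<lambda>_. 0)"
  define c' where "c' s = \<psi> (c s)" for s
  have c_M: "c s \<in> M" for s using c by (simp add: bar_chains_def)
  have "\<psi> 0 = 0" using \<psi>_add[of 0 0] by simp
  have "act z 0 = 0" using act_add[of z 0 0] by simp
  have \<psi>_eq_0: "c s = 0" if "\<psi> (c s) = 0" for s
    using \<psi>_inverse[OF c_M, of s] that \<open>act z 0 = 0\<close> by simp
  then have c'_eq_0: "c' s = 0 \<longleftrightarrow> c s = 0" for s by (auto simp: c'_def \<open>\<psi> 0 = 0\<close>)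
  have c': "c' \<in> bar_chains G M i"
    using c c'_eq_0 \<psi>_M[OF c_M] by (simp add: bar_chains_def c'_def)
  then have fin: "finite (supp c')" and gens: "\<And>s. s \<in> supp c' \<Longrightarrow> length s = i \<and> set s \<subseteq> G"
    by (auto simp: bar_chains_def supp_def)
  have "bar_bd gmul act (linext (homotopy_gen z) c') = (\<lambda>t. c' t - act z (c' t))"
  proof (cases "i = 0")
    case True
    then show ?thesis
      using gens by (intro bar_bd_homotopy_Nil[where act = act, OF act_add fin]) auto
  next
    case False
    then have "bar_bd gmul act c = 0" using cycle by auto
    moreover have "bar_bd gmul act c' = (\<lambda>t. \<psi> (bar_bd gmul act c t))"
      unfolding c'_def using \<psi>_add \<psi>_act \<psi>_eq_0 by (rule bar_bd_comp)
    ultimately have "bar_bd gmul act c' = 0" using \<open>\<psi> 0 = 0\<close> by auto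
    moreover have "s \<noteq> [] \<and> (\<forall>a\<in>set s. gmul a z = gmul z a)" if "s \<in> supp c'" for s
      using gens[OF that] False central by auto
    ultimately show ?thesis using bar_bd_homotopy[where act = act, OF act_add fin] by simp
  qed
  also have "\<dots> = c" using \<psi>_inverse[OF c_M] by (simp add: c'_def)
  finally show "\<exists>b\<in>bar_chains G M (Suc i). bar_bd gmul act b = c"
    using homotopy_in_bar_chains[OF c' \<open>z \<in> G\<close> M] by blast
qed

section \<open>The local ring Z_(p) and the central element -1 of O_n(Z_(p))\<close>

lemma zloc_iff:
  assumes "prime p"
  shows "q \<in> zloc p \<longleftrightarrow> (\<exists>a b. \<not> int p dvd b \<and> q = of_int a / of_int b)"
proof
  assume "q \<in> zloc p"
  moreover obtain a b where ab: "quotient_of q = (a, b)" by (cases "quotient_of q")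
  ultimately show "\<exists>a b. \<not> int p dvd b \<and> q = of_int a / of_int b"
    using quotient_of_div[OF ab] unfolding zloc_def by auto
next
  assume "\<exists>a b. \<not> int p dvd b \<and> q = of_int a / of_int b"
  then obtain a b where b: "\<not> int p dvd b" and q: "q = of_int a / of_int b" by blast
  have "b \<noteq> 0" using b by auto
  obtain n d where nd: "quotient_of q = (n, d)" by (cases "quotient_of q")
  have "d > 0" using nd quotient_of_denom_pos by blast
  moreover have "q = of_int n / of_int d" using nd quotient_of_div by blast
  ultimately have "(of_int (a * d) :: rat) = of_int (n * b)"
    using q \<open>b \<noteq> 0\<close> by (simp add: field_simps)
  then have "a * d = n * b" by (simp only: of_int_eq_iff)
  then have "d dvd n * b" by (metis dvd_triv_right)
  then have "d dvd b"
    using nd quotient_of_coprime coprime_commute coprime_dvd_mult_right_iff by blast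
  then have "\<not> int p dvd d" using b dvd_trans by blast
  then show "q \<in> zloc p" unfolding zloc_def using nd by simp
qed

lemma zloc_of_int:
  assumes "prime p"
  shows "of_int k \<in> zloc p"
proof -
  have "\<not> int p dvd 1" using prime_gt_1_nat[OF assms] by simp
  then show ?thesis unfolding zloc_iff[OF assms] by (intro exI[of _ k] exI[of _ 1]) simp
qed

lemma zloc_add:
  assumes p: "prime p" and "x \<in> zloc p" and "y \<in> zloc p"
  shows "x + y \<in> zloc p"
proof -
  obtain a b where b: "\<not> int p dvd b" and x: "x = of_int a / of_int b"
    using assms zloc_iff by blast
  obtain c d where d: "\<not> int p dvd d" and y: "y = of_int c / of_int d"
    using assms zloc_iff by blast
  have "b \<noteq> 0" "d \<noteq> 0" using b d by auto
  then have "x + y = of_int (a * d + c * b) / of_int (b * d)" using x y by (simp add: field_simps)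
  moreover have "\<not> int p dvd b * d" using b d p by (simp add: prime_dvd_mult_iff)
  ultimately show ?thesis using zloc_iff[OF p] by blast
qed

lemma zloc_uminus:
  assumes p: "prime p" and "x \<in> zloc p"
  shows "- x \<in> zloc p"
proof -
  obtain a b where "\<not> int p dvd b" and "x = of_int a / of_int b"
    using assms zloc_iff by blast
  then show ?thesis unfolding zloc_iff[OF p] by (intro exI[of _ "- a"] exI[of _ b]) simp
qed

lemma zloc_divide_int:
  assumes p: "prime p" and "x \<in> zloc p" and k: "\<not> int p dvd k"
  shows "x / of_int k \<in> zloc p"
proof -
  obtain a b where b: "\<not> int p dvd b" and x: "x = of_int a / of_int b"
    using assms zloc_iff by blast
  have "x / of_int k = of_int a / of_int (b * k)" using x by simp
  moreover have "\<not> int p dvd b * k" using b k p by (simp add: prime_dvd_mult_iff)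
  ultimately show ?thesis using zloc_iff[OF p] by blast
qed

lemma zloc_half:
  assumes "prime p" and "odd p" and "x \<in> zloc p"
  shows "x / 2 \<in> zloc p"
proof -
  have "\<not> int p dvd 2"
  proof
    assume "int p dvd 2"
    then have "p dvd 2" by presburger
    then have "p \<le> 2" by (simp add: dvd_imp_le)
    then have "p = 2" using prime_ge_2_nat[OF assms(1)] by simp
    then show False using assms(2) by simp
  qed
  then show ?thesis using zloc_divide_int[OF assms(1,3), of 2] by simp
qed

lemma sum_mat_one_left: "(\<Sum>k<n. mat_one n i k * f k) = (if i < n then f i else 0)"
proof -
  have "(\<Sum>k<n. mat_one n i k * f k) = (\<Sum>k<n. if i = k then f k else 0)"
    by (intro sum.cong) (auto simp: mat_one_def)
  then show ?thesis by simp
qed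

lemma sum_mat_one_right: "(\<Sum>k<n. f k * mat_one n k j) = (if j < n then f j else 0)"
proof -
  have "(\<Sum>k<n. f k * mat_one n k j) = (\<Sum>k<n. if j = k then f k else 0)"
    by (intro sum.cong) (auto simp: mat_one_def)
  then show ?thesis by simp
qed

lemma mat_vec_neg_mat_one: "mat_vec n (- mat_one n) v = (\<lambda>k. if k < n then - v k else 0)"
  by (simp add: mat_vec_def sum_negf sum_mat_one_left fun_eq_iff)

lemma mat_mult_neg_mat_one_left:
  "mat_mult n (- mat_one n) A = (\<lambda>i j. if i < n then - A i j else 0)"
  by (simp add: mat_mult_def sum_negf sum_mat_one_left fun_eq_iff)

lemma mat_mult_neg_mat_one_right:
  "mat_mult n A (- mat_one n) = (\<lambda>i j. if j < n then - A i j else 0)"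
  by (simp add: mat_mult_def sum_negf sum_mat_one_right fun_eq_iff)

lemma neg_mat_one_in_orth_group:
  assumes "prime p"
  shows "- mat_one n \<in> orth_group n p"
proof -
  have "- mat_one n \<in> zmats n p"
    using zloc_of_int[OF assms, of 0] zloc_of_int[OF assms, of "- 1"]
    by (auto simp: zmats_def mat_one_def)
  moreover have "mat_mult n (- mat_one n) (- mat_one n) = mat_one n"
    unfolding mat_mult_neg_mat_one_left by (auto simp: mat_one_def fun_eq_iff)
  moreover have "qform n (mat_vec n (- mat_one n) v) = qform n v" for v
    unfolding qform_def mat_vec_neg_mat_one by (intro sum.cong) auto
  ultimately show ?thesis unfolding orth_group_def by blast
qed

lemma neg_mat_one_central:
  "A \<in> orth_group n p \<Longrightarrow> mat_mult n A (- mat_one n) = mat_mult n (- mat_one n) A"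
  by (auto simp: mat_mult_neg_mat_one_left mat_mult_neg_mat_one_right orth_group_def zmats_def
      fun_eq_iff)

lemma mat_vec_add: "mat_vec n A (v + w) = mat_vec n A v + mat_vec n A w"
  by (simp add: mat_vec_def fun_eq_iff distrib_left sum.distrib)

lemma zvecs_zero: "prime p \<Longrightarrow> 0 \<in> zvecs n p"
  using zloc_of_int[of p 0] by (simp add: zvecs_def)

lemma zvecs_add: "prime p \<Longrightarrow> v \<in> zvecs n p \<Longrightarrow> w \<in> zvecs n p \<Longrightarrow> v + w \<in> zvecs n p"
  by (simp add: zvecs_def zloc_add)

lemma zvecs_uminus: "prime p \<Longrightarrow> v \<in> zvecs n p \<Longrightarrow> - v \<in> zvecs n p"
  by (simp add: zvecs_def zloc_uminus)

lemma zvecs_half: "prime p \<Longrightarrow> odd p \<Longrightarrow> v \<in> zvecs n p \<Longrightarrow> (\<lambda>k. v k / 2) \<in> zvecs n p"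
  by (simp add: zvecs_def zloc_half)

theorem corollaryD:
  fixes p n i :: nat
  assumes "prime p" and "odd p" and "2 * i + 8 \<le> n"
  shows "group_homology_vanishes (orth_group n p) (mat_mult n) (mat_vec n) (zvecs n p) i"
proof -
  define half where "half v = (\<lambda>k. v k / 2)" for v :: "nat \<Rightarrow> rat"
  have "half (v + w) = half v + half w" for v w
    by (simp add: half_def fun_eq_iff add_divide_distrib)
  moreover have "half (mat_vec n A v) = mat_vec n A (half v)" for A v
    by (simp add: half_def mat_vec_def fun_eq_iff sum_divide_distrib)
  moreover have "half v - mat_vec n (- mat_one n) (half v) = v" if "v \<in> zvecs n p" for v
    using that by (auto simp: half_def mat_vec_neg_mat_one zvecs_def fun_eq_iff)
  ultimately show ?thesis
    using neg_mat_one_in_orth_group[OF assms(1)] neg_mat_one_central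
      zvecs_zero[OF assms(1)] zvecs_add[OF assms(1)] zvecs_uminus[OF assms(1)]
      zvecs_half[OF assms(1,2)]
    by (intro center_kills_group_homology[where \<psi> = half]) (auto simp: mat_vec_add half_def)
qed

end
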